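(* Let $G$ be a finite group with $G=\langle x,y\rangle$, where $x$ has order $3$ and $y$ has order at least $4$. Then $\mathrm{Cay}(G,\{x,y\})$ is an oriented regular representation (ORR) of $G$, unless $y$ has order $6$, $x=y^4$, and $G\cong\mathbb{Z}_6$.
   Context: For a group $G$ and $S\subseteq G$, the Cayley digraph $\mathrm{Cay}(G,S)$ has vertex set $G$, and $(u,v)$ is an arc whenever $vu^{-1}\in S$. Its automorphism group consists of the permutations of $G$ preserving the arc set, and always contains the right regular representation of $G$. $\mathrm{Cay}(G,S)$ is an oriented regular representation (ORR) if its automorphism group equals the right regular representation of $G$ and it is a proper digraph, i.e. $(u,v)$ being an arc implies $(v,u)$ is not an arc (equivalently $S\cap S^{-1}=\emptyset$). *)

theory Defs
  imports "HOL-Algebra.Multiplicative_Group" "HOL-Algebra.Elementary_Groups"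
begin

definition cay_arc :: "('a, 'b) monoid_scheme \<Rightarrow> 'a set \<Rightarrow> 'a \<Rightarrow> 'a \<Rightarrow> bool" where
  "cay_arc G S u v \<longleftrightarrow> u \<in> carrier G \<and> v \<in> carrier G \<and> v \<otimes>\<^bsub>G\<^esub> inv\<^bsub>G\<^esub> u \<in> S"

definition cay_aut :: "('a, 'b) monoid_scheme \<Rightarrow> 'a set \<Rightarrow> ('a \<Rightarrow> 'a) set" where
  "cay_aut G S = {\<sigma>. bij_betw \<sigma> (carrier G) (carrier G) \<and> \<sigma> \<in> extensional (carrier G) \<and>
      (\<forall>u\<in>carrier G. \<forall>v\<in>carrier G. cay_arc G S u v \<longleftrightarrow> cay_arc G S (\<sigma> u) (\<sigma> v))}"

definition right_regular :: "('a, 'b) monoid_scheme \<Rightarrow> ('a \<Rightarrow> 'a) set" where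
  "right_regular G = (\<lambda>g. restrict (\<lambda>u. u \<otimes>\<^bsub>G\<^esub> g) (carrier G)) ` carrier G"

definition proper_cay :: "('a, 'b) monoid_scheme \<Rightarrow> 'a set \<Rightarrow> bool" where
  "proper_cay G S \<longleftrightarrow> (\<forall>u v. cay_arc G S u v \<longrightarrow> \<not> cay_arc G S v u)"

definition is_ORR :: "('a, 'b) monoid_scheme \<Rightarrow> 'a set \<Rightarrow> bool" where
  "is_ORR G S \<longleftrightarrow> cay_aut G S = right_regular G \<and> proper_cay G S"

end

theory Submission
  imports Defs
begin

(* Every arc of Cay(G, {x, y}) labelled x lies on the directed triangle u, xu, x^2 u,
   while, unless x y^2 = 1, no word t s y with s, t in {x, y} is trivial, so an arc
   labelled y lies on no directed triangle.  Hence every automorphism preserves arc labels,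
   i.e. commutes with left multiplication by x and y, and therefore with left
   multiplication by all of G = <x, y>; such a permutation is a right translation.
   Properness holds because neither x nor y is an involution and x^-1 <> y.  In the
   remaining case x = y^-2 forces y^6 = 1, so y has order 6, x = y^4 and G = <y> is
   cyclic of order 6. *)

lemma (in group) cube_eq_one_iff_ord_dvd_3:
  "a \<in> carrier G \<Longrightarrow> a \<otimes> (a \<otimes> a) = \<one> \<longleftrightarrow> ord a dvd 3"
  using pow_eq_id[of a 3] by (simp add: numeral_3_eq_3 m_assoc)

lemma (in group) cay_arc_iff:
  assumes "S \<subseteq> carrier G"
  shows "cay_arc G S u v \<longleftrightarrow> u \<in> carrier G \<and> (\<exists>s\<in>S. v = s \<otimes> u)"
proof
  assume "cay_arc G S u v"
  then have u: "u \<in> carrier G" and v: "v \<in> carrier G" and s: "v \<otimes> inv u \<in> S"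
    by (auto simp: cay_arc_def)
  have "v = (v \<otimes> inv u) \<otimes> u" using u v by (simp add: m_assoc)
  with u s show "u \<in> carrier G \<and> (\<exists>s\<in>S. v = s \<otimes> u)" by blast
next
  assume "u \<in> carrier G \<and> (\<exists>s\<in>S. v = s \<otimes> u)"
  then obtain s where u: "u \<in> carrier G" and s: "s \<in> S" and v: "v = s \<otimes> u" by blast
  have "s \<in> carrier G" using s assms by blast
  with u v s show "cay_arc G S u v" by (simp add: cay_arc_def m_assoc)
qed

lemma (in group) right_regular_subset_cay_aut:
  assumes "S \<subseteq> carrier G"
  shows "right_regular G \<subseteq> cay_aut G S"
proof
  fix \<sigma> assume "\<sigma> \<in> right_regular G"
  then obtain g where g: "g \<in> carrier G" and \<sigma>: "\<sigma> = restrict (\<lambda>u. u \<otimes> g) (carrier G)"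
    by (auto simp: right_regular_def)
  have "bij_betw \<sigma> (carrier G) (carrier G)"
  proof (rule bij_betwI')
    show "\<And>u v. u \<in> carrier G \<Longrightarrow> v \<in> carrier G \<Longrightarrow> \<sigma> u = \<sigma> v \<longleftrightarrow> u = v"
      using g by (simp add: \<sigma>)
    show "\<And>u. u \<in> carrier G \<Longrightarrow> \<sigma> u \<in> carrier G" using g by (simp add: \<sigma>)
    show "\<exists>u\<in>carrier G. v = \<sigma> u" if "v \<in> carrier G" for v
      using that g by (intro bexI[of _ "v \<otimes> inv g"]) (simp_all add: \<sigma> m_assoc)
  qed
  moreover have "cay_arc G S u v \<longleftrightarrow> cay_arc G S (\<sigma> u) (\<sigma> v)"
    if "u \<in> carrier G" "v \<in> carrier G" for u v
  proof -
    have "(v \<otimes> g) \<otimes> inv (u \<otimes> g) = v \<otimes> inv u"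
      using that g by (simp add: inv_mult_group m_assoc flip: m_assoc[of g "inv g"])
    then show ?thesis using that g by (simp add: \<sigma> cay_arc_def)
  qed
  ultimately show "\<sigma> \<in> cay_aut G S" by (simp add: cay_aut_def \<sigma>)
qed

lemma (in group) proper_cayI:
  assumes "S \<subseteq> carrier G" and "\<And>s. s \<in> S \<Longrightarrow> inv s \<notin> S"
  shows "proper_cay G S"
  unfolding proper_cay_def
proof (intro allI impI notI)
  fix u v
  assume "cay_arc G S u v" and "cay_arc G S v u"
  then have u: "u \<in> carrier G" and v: "v \<in> carrier G"
    and "v \<otimes> inv u \<in> S" and "inv (v \<otimes> inv u) \<in> S"
    by (auto simp: cay_arc_def inv_mult_group)
  with assms(2) show False by blast
qed

lemma (in group) inv_neq_self_if_ord_ge_3: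
  assumes "a \<in> carrier G" and "ord a \<ge> 3"
  shows "inv a \<noteq> a"
proof
  assume "inv a = a"
  then have "a \<otimes> a = \<one>" using l_inv[OF assms(1)] by simp
  then have "a [^] (2::nat) = \<one>" using assms(1) by (simp add: numeral_2_eq_2)
  then have "ord a dvd 2" using assms(1) pow_eq_id by blast
  with assms(2) show False by (auto dest: dvd_imp_le)
qed

lemma (in group) proper_cay_ord_3_ord_ge_4:
  assumes "x \<in> carrier G" "y \<in> carrier G" "ord x = 3" "ord y \<ge> 4"
  shows "proper_cay G {x, y}"
proof (rule proper_cayI)
  have "inv x \<noteq> y" "inv y \<noteq> x" using assms ord_inv by fastforce+
  moreover have "inv x \<noteq> x" using inv_neq_self_if_ord_ge_3[of x] assms by simp
  moreover have "inv y \<noteq> y" using inv_neq_self_if_ord_ge_3[of y] assms by simp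
  ultimately show "\<And>s. s \<in> {x, y} \<Longrightarrow> inv s \<notin> {x, y}" by auto
qed (use assms in auto)

lemma (in group) cay_aut_closed:
  "\<sigma> \<in> cay_aut G S \<Longrightarrow> u \<in> carrier G \<Longrightarrow> \<sigma> u \<in> carrier G"
  unfolding cay_aut_def using bij_betwE by blast

lemma (in group) cay_aut_arc_image:
  assumes \<sigma>: "\<sigma> \<in> cay_aut G S" and S: "S \<subseteq> carrier G"
    and u: "u \<in> carrier G" and s: "s \<in> S"
  obtains t where "t \<in> S" and "\<sigma> (s \<otimes> u) = t \<otimes> \<sigma> u"
proof -
  have su: "s \<otimes> u \<in> carrier G" using s S u by blast
  have "cay_arc G S u (s \<otimes> u)" using cay_arc_iff[OF S] u s by blast
  then have "cay_arc G S (\<sigma> u) (\<sigma> (s \<otimes> u))"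
    using \<sigma> u su by (simp add: cay_aut_def)
  then show ?thesis using that cay_arc_iff[OF S] by blast
qed

lemma (in group) cay_aut_preserves_labels:
  assumes \<sigma>: "\<sigma> \<in> cay_aut G {x, y}" and x: "x \<in> carrier G" and y: "y \<in> carrier G"
    and x3: "x \<otimes> (x \<otimes> x) = \<one>" and "x \<noteq> y"
    and no_triangle: "\<And>s t. s \<in> {x, y} \<Longrightarrow> t \<in> {x, y} \<Longrightarrow> t \<otimes> (s \<otimes> y) \<noteq> \<one>"
    and u: "u \<in> carrier G"
  shows "\<sigma> (x \<otimes> u) = x \<otimes> \<sigma> u" and "\<sigma> (y \<otimes> u) = y \<otimes> \<sigma> u"
proof -
  have S: "{x, y} \<subseteq> carrier G" using x y by blast
  note image = cay_aut_arc_image[OF \<sigma> S]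
  have xu: "x \<otimes> u \<in> carrier G" and xxu: "x \<otimes> (x \<otimes> u) \<in> carrier G" using x u by auto
  obtain r where r: "r \<in> {x, y}" "\<sigma> (x \<otimes> u) = r \<otimes> \<sigma> u" using image[OF u] by blast
  obtain s where s: "s \<in> {x, y}" "\<sigma> (x \<otimes> (x \<otimes> u)) = s \<otimes> \<sigma> (x \<otimes> u)" using image[OF xu] by blast
  obtain t where t: "t \<in> {x, y}" "\<sigma> (x \<otimes> (x \<otimes> (x \<otimes> u))) = t \<otimes> \<sigma> (x \<otimes> (x \<otimes> u))"
    using image[OF xxu] by blast
  have \<sigma>u: "\<sigma> u \<in> carrier G" using cay_aut_closed[OF \<sigma> u] .
  have rst: "r \<in> carrier G" "s \<in> carrier G" "t \<in> carrier G" using r s t S by auto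
  \<comment> \<open>the triangle u, xu, x x u is mapped to a closed walk with labels r, s, t\<close>
  have "x \<otimes> (x \<otimes> (x \<otimes> u)) = u" using x u x3 by (simp flip: m_assoc)
  then have "\<one> \<otimes> \<sigma> u = (t \<otimes> (s \<otimes> r)) \<otimes> \<sigma> u"
    using r s t rst \<sigma>u by (simp add: m_assoc)
  then have "t \<otimes> (s \<otimes> r) = \<one>" using rst \<sigma>u by (metis m_closed right_cancel one_closed)
  then have "r = x" using no_triangle[OF s(1) t(1)] r(1) by blast
  with r show x_case: "\<sigma> (x \<otimes> u) = x \<otimes> \<sigma> u" by simp
  obtain r' where r': "r' \<in> {x, y}" "\<sigma> (y \<otimes> u) = r' \<otimes> \<sigma> u" using image[OF u] by blast
  have "inj_on \<sigma> (carrier G)" using \<sigma> by (simp add: cay_aut_def bij_betw_def)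
  then have "\<sigma> (y \<otimes> u) \<noteq> \<sigma> (x \<otimes> u)"
    using inj_onD[of \<sigma> _ "y \<otimes> u" "x \<otimes> u"] \<open>x \<noteq> y\<close> x y u by auto
  then show "\<sigma> (y \<otimes> u) = y \<otimes> \<sigma> u" using r' x_case by auto
qed

lemma (in group) right_translation_if_commutes_with_generators:
  assumes \<sigma>: "\<sigma> \<in> carrier G \<rightarrow> carrier G" and gen: "generate G S = carrier G"
    and comm: "\<And>s w. s \<in> S \<Longrightarrow> w \<in> carrier G \<Longrightarrow> \<sigma> (s \<otimes> w) = s \<otimes> \<sigma> w"
    and u: "u \<in> carrier G"
  shows "\<sigma> u = u \<otimes> \<sigma> \<one>"
proof -
  have S: "S \<subseteq> carrier G" by (auto simp flip: gen intro: generate.incl)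
  have "\<sigma> (a \<otimes> w) = a \<otimes> \<sigma> w" if "a \<in> generate G S" "w \<in> carrier G" for a w
    using that
  proof (induction a arbitrary: w rule: generate.induct)
    case one
    then show ?case using \<sigma> by (simp add: funcset_mem)
  next
    case (incl h)
    then show ?case using comm by blast
  next
    case (inv h)
    have h: "h \<in> carrier G" using inv S by blast
    have hw: "inv h \<otimes> w \<in> carrier G" using h inv.prems by simp
    have "h \<otimes> \<sigma> (inv h \<otimes> w) = \<sigma> w"
      using comm[OF inv.hyps hw] h inv.prems by (simp flip: m_assoc)
    then show ?case
      using inv_solve_left[OF funcset_mem[OF \<sigma> hw] h funcset_mem[OF \<sigma> inv.prems]] by simp
  next
    case (eng h1 h2)
    have "h1 \<in> carrier G" "h2 \<in> carrier G" using eng.hyps gen by auto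
    then show ?case using eng.IH eng.prems funcset_mem[OF \<sigma>] by (simp add: m_assoc)
  qed
  from this[of u \<one>] show ?thesis using u gen by simp
qed

lemma (in group) cay_aut_subset_right_regular:
  assumes x: "x \<in> carrier G" and y: "y \<in> carrier G" and gen: "generate G {x, y} = carrier G"
    and x3: "x \<otimes> (x \<otimes> x) = \<one>" and "x \<noteq> y"
    and no_triangle: "\<And>s t. s \<in> {x, y} \<Longrightarrow> t \<in> {x, y} \<Longrightarrow> t \<otimes> (s \<otimes> y) \<noteq> \<one>"
  shows "cay_aut G {x, y} \<subseteq> right_regular G"
proof
  fix \<sigma> assume \<sigma>: "\<sigma> \<in> cay_aut G {x, y}"
  have closed: "\<sigma> \<in> carrier G \<rightarrow> carrier G" using cay_aut_closed[OF \<sigma>] by (rule funcsetI)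
  have comm: "\<sigma> (s \<otimes> w) = s \<otimes> \<sigma> w" if "s \<in> {x, y}" "w \<in> carrier G" for s w
    using that cay_aut_preserves_labels[OF \<sigma> x y x3 \<open>x \<noteq> y\<close> no_triangle] by auto
  define g where "g = \<sigma> \<one>"
  have g: "g \<in> carrier G" using closed by (auto simp: g_def)
  have translation: "\<sigma> u = u \<otimes> g" if "u \<in> carrier G" for u
    unfolding g_def using right_translation_if_commutes_with_generators[OF closed gen comm that] .
  have "\<sigma> \<in> extensional (carrier G)" using \<sigma> by (simp add: cay_aut_def)
  then have "\<sigma> = restrict (\<lambda>u. u \<otimes> g) (carrier G)"
    using translation by (intro ext) (simp add: extensional_def)
  with g show "\<sigma> \<in> right_regular G" unfolding right_regular_def by blast
qed

lemma (in group) no_triangle_word_ending_in_y: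
  assumes x: "x \<in> carrier G" and y: "y \<in> carrier G"
    and x3: "x \<otimes> (x \<otimes> x) = \<one>" and "x \<noteq> y" and y3: "y \<otimes> (y \<otimes> y) \<noteq> \<one>"
    and xyy: "x \<otimes> (y \<otimes> y) \<noteq> \<one>" and s: "s \<in> {x, y}" and t: "t \<in> {x, y}"
  shows "t \<otimes> (s \<otimes> y) \<noteq> \<one>"
proof -
  have "x \<otimes> (x \<otimes> y) \<noteq> \<one>"
  proof
    assume "x \<otimes> (x \<otimes> y) = \<one>"
    then have "x \<otimes> (x \<otimes> (x \<otimes> y)) = x" using x by simp
    then have "y = x" using x y x3 by (simp flip: m_assoc)
    with \<open>x \<noteq> y\<close> show False by simp
  qed
  moreover have "y \<otimes> (x \<otimes> y) \<noteq> \<one>"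
  proof
    assume "y \<otimes> (x \<otimes> y) = \<one>"
    then have "inv y \<otimes> (y \<otimes> (x \<otimes> y)) \<otimes> y = \<one>" using y by simp
    then have "x \<otimes> (y \<otimes> y) = \<one>" using x y by (simp add: m_assoc flip: m_assoc[of "inv y" y])
    with xyy show False by simp
  qed
  ultimately show ?thesis using s t y3 xyy by auto
qed

lemma (in group) is_ORR_ord_3_ord_ge_4:
  assumes x: "x \<in> carrier G" and y: "y \<in> carrier G" and gen: "generate G {x, y} = carrier G"
    and ox: "ord x = 3" and oy: "ord y \<ge> 4" and xyy: "x \<otimes> (y \<otimes> y) \<noteq> \<one>"
  shows "is_ORR G {x, y}"
proof -
  have x3: "x \<otimes> (x \<otimes> x) = \<one>" using cube_eq_one_iff_ord_dvd_3[OF x] ox by simp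
  have y3: "y \<otimes> (y \<otimes> y) \<noteq> \<one>"
    using cube_eq_one_iff_ord_dvd_3[OF y] oy by (auto dest: dvd_imp_le)
  have "x \<noteq> y" using ox oy by auto
  have "cay_aut G {x, y} = right_regular G"
    using cay_aut_subset_right_regular[OF x y gen x3 \<open>x \<noteq> y\<close>]
      no_triangle_word_ending_in_y[OF x y x3 \<open>x \<noteq> y\<close> y3 xyy]
      right_regular_subset_cay_aut[of "{x, y}"] x y
    by blast
  then show ?thesis using proper_cay_ord_3_ord_ge_4[OF x y ox oy] by (simp add: is_ORR_def)
qed

lemma (in group) nat_pow_mem_generate_singleton:
  "a \<in> carrier G \<Longrightarrow> a [^] (n::nat) \<in> generate G {a}"
  unfolding generate_pow by (auto intro!: exI[of _ "int n"] simp: int_pow_int)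

lemma (in group) generate_insert_redundant:
  assumes "H \<subseteq> carrier G" and "a \<in> generate G H"
  shows "generate G (insert a H) = generate G H"
proof
  show "generate G (insert a H) \<subseteq> generate G H"
    using assms generate.incl[of _ H G] by (intro generate_subgroup_incl generate_is_subgroup) auto
  show "generate G H \<subseteq> generate G (insert a H)" by (rule mono_generate) blast
qed

lemma (in group) iso_integer_mod_group_ord:
  assumes y: "y \<in> carrier G" and gen: "generate G {y} = carrier G"
  shows "G \<cong> integer_mod_group (ord y)"
proof -
  define n where "n = int (ord y)"
  define h where "h = (\<lambda>k::int. y [^] k)"
  have h_eq: "h a = h b \<longleftrightarrow> a mod n = b mod n" for a b
  proof -
    have "h a = h b \<longleftrightarrow> n dvd b - a" using int_pow_eq[OF y] by (simp add: h_def n_def)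
    also have "\<dots> \<longleftrightarrow> n dvd a - b" by (rule dvd_diff_commute)
    also have "\<dots> \<longleftrightarrow> a mod n = b mod n" by (rule mod_eq_dvd_iff[symmetric])
    finally show ?thesis .
  qed
  have carrier_mod: "k mod n = k" if "k \<in> carrier (integer_mod_group (ord y))" for k
    using that by (auto simp: carrier_integer_mod_group n_def split: if_splits)
  have "h \<in> hom (integer_mod_group (ord y)) G"
  proof (rule homI)
    show "h a \<in> carrier G" for a using y by (simp add: h_def)
    show "h (a \<otimes>\<^bsub>integer_mod_group (ord y)\<^esub> b) = h a \<otimes> h b" for a b
      using y h_eq[of "(a + b) mod n" "a + b"] by (simp add: h_def int_pow_mult n_def)
  qed
  moreover have "inj_on h (carrier (integer_mod_group (ord y)))"
  proof (rule inj_onI)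
    fix a b assume "a \<in> carrier (integer_mod_group (ord y))" "b \<in> carrier (integer_mod_group (ord y))"
      and "h a = h b"
    then show "a = b" using h_eq[of a b] carrier_mod[of a] carrier_mod[of b] by simp
  qed
  moreover have "h ` carrier (integer_mod_group (ord y)) = carrier G"
  proof
    show "h ` carrier (integer_mod_group (ord y)) \<subseteq> carrier G" using y by (auto simp: h_def)
    show "carrier G \<subseteq> h ` carrier (integer_mod_group (ord y))"
    proof
      fix v assume "v \<in> carrier G"
      then obtain k where "v = h k" using gen generate_pow[OF y] by (auto simp: h_def)
      then have "v = h (k mod n)" using h_eq by simp
      moreover have "k mod n \<in> carrier (integer_mod_group (ord y))"
        by (auto simp: carrier_integer_mod_group n_def)
      ultimately show "v \<in> h ` carrier (integer_mod_group (ord y))" by blast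
    qed
  qed
  ultimately have "integer_mod_group (ord y) \<cong> G" by (auto simp: iso_iff intro: is_isoI)
  then show ?thesis using group.iso_sym[OF group_integer_mod_group] by blast
qed

lemma (in group) ord_6_if_x_inverse_y_squared:
  assumes x: "x \<in> carrier G" and y: "y \<in> carrier G"
    and ox: "ord x = 3" and oy: "ord y \<ge> 4" and xyy: "x \<otimes> (y \<otimes> y) = \<one>"
  shows "ord y = 6" and "x = y [^] (4::nat)"
proof -
  have yy: "y \<otimes> y = y [^] (2::nat)" using y by (simp add: numeral_2_eq_2)
  have x_inv: "x = inv (y [^] (2::nat))" using inv_equality[OF xyy] x y yy by simp
  have "inv (y [^] (6::nat)) = x [^] (3::nat)"
    using y by (simp add: x_inv nat_pow_inv nat_pow_pow)
  then have y6: "y [^] (6::nat) = \<one>"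
    using pow_ord_eq_1[OF x] ox y by (metis inv_inv inv_one nat_pow_closed)
  then have "ord y dvd 6" using pow_eq_id[OF y] by blast
  then have "ord y \<in> {4, 5, 6}" using oy by (auto dest!: dvd_imp_le)
  with \<open>ord y dvd 6\<close> show "ord y = 6" by auto
  have "y [^] (4::nat) \<otimes> y [^] (2::nat) = \<one>" using y y6 by (simp add: nat_pow_mult)
  then show "x = y [^] (4::nat)" using x y xyy yy by (metis nat_pow_closed right_cancel)
qed

theorem lemma2p4:
  fixes G :: "('a, 'b) monoid_scheme" and x y :: 'a
  assumes "group G" and "finite (carrier G)"
    and "x \<in> carrier G" and "y \<in> carrier G"
    and "generate G {x, y} = carrier G"
    and "group.ord G x = 3" and "group.ord G y \<ge> 4"
  shows "is_ORR G {x, y} \<or>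
    (group.ord G y = 6 \<and> x = y [^]\<^bsub>G\<^esub> (4::nat) \<and> G \<cong> integer_mod_group 6)"
proof -
  interpret group G by fact
  show ?thesis
  proof (cases "x \<otimes>\<^bsub>G\<^esub> (y \<otimes>\<^bsub>G\<^esub> y) = \<one>\<^bsub>G\<^esub>")
    case False
    then show ?thesis using is_ORR_ord_3_ord_ge_4[OF assms(3-7)] by blast
  next
    case True
    note exceptional = ord_6_if_x_inverse_y_squared[OF assms(3,4,6,7) True]
    then have "x \<in> generate G {y}" using nat_pow_mem_generate_singleton[OF assms(4)] by simp
    then have "generate G {y} = carrier G"
      using generate_insert_redundant[of "{y}" x] assms(4,5) by simp
    then show ?thesis using iso_integer_mod_group_ord[OF assms(4)] exceptional by simp
  qed
qed

end
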